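(* Assume $\ln(2d)\ge1$, zero noise ($y=f^*(x)$), $f^*\in\mathcal{B}_2(X)$, and $\lambda\ge\lambda_n=4\sqrt{2\ln(2d)/n}$. Let $\tilde\theta$ be width-$m$ parameters with $\|\tilde\theta\|_{\mathcal{P}}\le2\gamma_2(f^* )$ (as given by the approximation theorem: $\mathbb{E}_x[(f^*(x)-\sum_ka_k\sigma(w_k^Tx))^2]\le3\gamma_2^2(f^* )/m$ and $\|\tilde\theta\|_{\mathcal{P}}\le2\gamma_2(f^* )$). Then for any $\delta>0$, with probability at least $1-\delta$ over the training set, $$J_\lambda(\tilde\theta)\le L(\tilde\theta)+8\lambda\hat\gamma_2(f^* )+2\sqrt{\frac{2\ln(2c/\delta)}{n}},$$ where $c=\sum_{k=1}^\infty1/k^2$.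
   Context: Setting: samples $(x,y)$ i.i.d. with $x\in X=[-1,1]^d$, $f^*(x)=\mathbb{E}[y\mid x]$, $0\le f^*\le1$. $\sigma$ is $1$-Lipschitz and positively homogeneous. Width-$m$ network: $f(x;\theta)=T\big(\sum_{k=1}^m a_k\sigma(w_k^Tx)\big)$, $T(t)=\max\{\min\{t,1\},0\}$. Path norm $\|\theta\|_{\mathcal{P}}=\sum_k|a_k|\|w_k\|_1$. Loss $\ell(y,y')=\frac12(y-y')^2$; $L(\theta)=\mathbb{E}_{x,y}[\ell(f(x;\theta),y)]$; $\hat L_n(\theta)=\frac1n\sum_i\ell(f(x_i;\theta),y_i)$; $J_\lambda(\theta)=\hat L_n(\theta)+\lambda(\|\theta\|_{\mathcal{P}}+1)$. Barron space: $\mathbb{S}^d=\{w:\|w\|_1=1\}$; $\mathcal{B}(X)$ is the set of $f$ with $f(x)=\int_{\mathbb{S}^d}a(w)\sigma(\langle w,x\rangle)d\pi(w)$ on $X$ for a Borel probability measure $\pi$ on $\mathbb{S}^d$ and measurable $a$ (set of such $(a,\pi)$: $\Theta_f$); $\gamma_p(f)=\inf_{(a,\pi)\in\Theta_f}(\int|a|^pd\pi)^{1/p}$; $\mathcal{B}_p(X)=\{f:\gamma_p(f)<\infty\}$; $\hat\gamma_p(f)=\max\{1,\gamma_p(f)\}$. *)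

theory Defs
  imports "HOL-Probability.Probability"
begin

text \<open>Input domain X = [-1,1]^d, inputs are vectors of type real^'d with d = CARD('d).\<close>
definition cube :: "(real^'d) set" where
  "cube = {x. \<forall>i. \<bar>x $ i\<bar> \<le> 1}"

definition l1norm :: "real^'d \<Rightarrow> real" where
  "l1norm w = (\<Sum>i\<in>UNIV. \<bar>w $ i\<bar>)"

definition sphere1 :: "(real^'d) set" where
  "sphere1 = {w. l1norm w = 1}"

definition clip :: "real \<Rightarrow> real" where
  "clip t = max (min t 1) 0"

text \<open>Width-m network, parameters theta = (a_k, w_k)_{k<m}.\<close>
definition net :: "(real \<Rightarrow> real) \<Rightarrow> nat \<Rightarrow> (nat \<Rightarrow> real) \<Rightarrow> (nat \<Rightarrow> real^'d) \<Rightarrow> real^'d \<Rightarrow> real" where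
  "net \<sigma> m a w x = clip (\<Sum>k<m. a k * \<sigma> (w k \<bullet> x))"

definition path_norm :: "nat \<Rightarrow> (nat \<Rightarrow> real) \<Rightarrow> (nat \<Rightarrow> real^'d) \<Rightarrow> real" where
  "path_norm m a w = (\<Sum>k<m. \<bar>a k\<bar> * l1norm (w k))"

definition sq_loss :: "real \<Rightarrow> real \<Rightarrow> real" where
  "sq_loss y y' = (1/2) * (y - y')^2"

text \<open>Zero noise: y = fs x. Population risk L(theta).\<close>
definition pop_risk :: "(real^'d) measure \<Rightarrow> (real^'d \<Rightarrow> real) \<Rightarrow> (real \<Rightarrow> real) \<Rightarrow> nat
    \<Rightarrow> (nat \<Rightarrow> real) \<Rightarrow> (nat \<Rightarrow> real^'d) \<Rightarrow> real" where
  "pop_risk \<mu> fs \<sigma> m a w = (\<integral>x. sq_loss (net \<sigma> m a w x) (fs x) \<partial>\<mu>)"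

definition emp_risk :: "(real^'d \<Rightarrow> real) \<Rightarrow> (real \<Rightarrow> real) \<Rightarrow> nat \<Rightarrow> (nat \<Rightarrow> real)
    \<Rightarrow> (nat \<Rightarrow> real^'d) \<Rightarrow> nat \<Rightarrow> (nat \<Rightarrow> real^'d) \<Rightarrow> real" where
  "emp_risk fs \<sigma> m a w n xs = (\<Sum>i<n. sq_loss (net \<sigma> m a w (xs i)) (fs (xs i))) / real n"

definition J_reg :: "real \<Rightarrow> (real^'d \<Rightarrow> real) \<Rightarrow> (real \<Rightarrow> real) \<Rightarrow> nat \<Rightarrow> (nat \<Rightarrow> real)
    \<Rightarrow> (nat \<Rightarrow> real^'d) \<Rightarrow> nat \<Rightarrow> (nat \<Rightarrow> real^'d) \<Rightarrow> real" where
  "J_reg lam fs \<sigma> m a w n xs = emp_risk fs \<sigma> m a w n xs + lam * (path_norm m a w + 1)"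

definition Barron_rep :: "(real \<Rightarrow> real) \<Rightarrow> (real^'d \<Rightarrow> real)
    \<Rightarrow> ((real^'d \<Rightarrow> real) \<times> (real^'d) measure) set" where
  "Barron_rep \<sigma> f = {(a, \<pi>). prob_space \<pi> \<and> sets \<pi> = sets borel \<and> emeasure \<pi> sphere1 = 1
      \<and> a \<in> borel_measurable \<pi>
      \<and> (\<forall>x\<in>cube. integrable \<pi> (\<lambda>w. a w * \<sigma> (w \<bullet> x))
                  \<and> f x = (\<integral>w. a w * \<sigma> (w \<bullet> x) \<partial>\<pi>))}"

definition in_Barron2 :: "(real \<Rightarrow> real) \<Rightarrow> (real^'d \<Rightarrow> real) \<Rightarrow> bool" where
  "in_Barron2 \<sigma> f \<longleftrightarrow> (\<exists>(a, \<pi>)\<in>Barron_rep \<sigma> f. integrable \<pi> (\<lambda>w. (a w)^2))"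

text \<open>gamma_2(f) (as a real number; meaningful for f in B_2, where the set is nonempty).\<close>
definition gamma2 :: "(real \<Rightarrow> real) \<Rightarrow> (real^'d \<Rightarrow> real) \<Rightarrow> real" where
  "gamma2 \<sigma> f = Inf {sqrt (\<integral>w. (a w)^2 \<partial>\<pi>) | a \<pi>.
      (a, \<pi>) \<in> Barron_rep \<sigma> f \<and> integrable \<pi> (\<lambda>w. (a w)^2)}"

definition gamma2_hat :: "(real \<Rightarrow> real) \<Rightarrow> (real^'d \<Rightarrow> real) \<Rightarrow> real" where
  "gamma2_hat \<sigma> f = max 1 (gamma2 \<sigma> f)"

end

theory Submission imports Defs begin

text \<open>For fixed parameters the empirical risk is a mean of n i.i.d. losses with values in
  [0, 1/2], since the clipped network and the target both take values in [0,1]. Hoeffding's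
  inequality therefore bounds it by the population risk plus the deviation term, and the
  path-norm bound controls the penalty by the Barron norm.\<close>

lemma net_borel_measurable [measurable]:
  assumes "\<sigma> \<in> borel_measurable borel"
  shows "net \<sigma> m a w \<in> borel_measurable (borel :: (real^'d) measure)"
  unfolding net_def clip_def using assms by measurable

lemma net_in_unit_interval: "net \<sigma> m a w x \<in> {0..1}"
  unfolding net_def clip_def by auto

lemma sq_loss_in_unit_interval:
  assumes "y \<in> {0..1}" "y' \<in> {0..1}"
  shows "sq_loss y y' \<in> {0..1/2}"
proof -
  have "(y - y')\<^sup>2 \<le> 1" using assms by (subst abs_square_le_1) auto
  then show ?thesis unfolding sq_loss_def by auto
qed

lemma suminf_inverse_Suc_squared_ge_1: "(\<Sum>k. 1 / (real (Suc k))^2) \<ge> 1"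
proof -
  have "summable (\<lambda>k. 1 / (real (Suc k))^2)"
    using inverse_power_summable[of 2, where 'a=real]
    by (subst summable_Suc_iff) (simp add: inverse_eq_divide)
  then have "(\<Sum>k\<in>{0}. 1 / (real (Suc k))^2) \<le> (\<Sum>k. 1 / (real (Suc k))^2)"
    by (rule sum_le_suminf) auto
  then show ?thesis by simp
qed

lemma indep_vars_PiM_components:
  assumes "prob_space \<mu>" "I \<noteq> {}"
  shows "prob_space.indep_vars (PiM I (\<lambda>_. \<mu>)) (\<lambda>_. \<mu>) (\<lambda>i \<omega>. \<omega> i) I"
proof -
  interpret P: prob_space "PiM I (\<lambda>_. \<mu>)" by (rule prob_space_PiM) (use assms in auto)
  show ?thesis
  proof (subst P.indep_vars_iff_distr_eq_PiM')
    show "I \<noteq> {}" by fact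
    show "(\<lambda>\<omega>. \<omega> i) \<in> measurable (PiM I (\<lambda>_. \<mu>)) \<mu>" if "i \<in> I" for i
      using that by auto
    have "distr (PiM I (\<lambda>_. \<mu>)) (PiM I (\<lambda>_. \<mu>)) (\<lambda>x. \<lambda>i\<in>I. x i)
        = distr (PiM I (\<lambda>_. \<mu>)) (PiM I (\<lambda>_. \<mu>)) (\<lambda>x. x)"
      by (rule distr_cong) (auto simp: space_PiM PiE_def extensional_def restrict_def fun_eq_iff)
    also have "\<dots> = PiM I (\<lambda>_. \<mu>)" by (rule distr_id)
    also have "\<dots> = PiM I (\<lambda>i. distr (PiM I (\<lambda>_. \<mu>)) \<mu> (\<lambda>\<omega>. \<omega> i))"
      by (rule PiM_cong) (auto simp: assms distr_PiM_component[where M="\<lambda>_. \<mu>", simplified])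
    finally show "distr (PiM I (\<lambda>_. \<mu>)) (PiM I (\<lambda>_. \<mu>)) (\<lambda>x. \<lambda>i\<in>I. x i)
        = PiM I (\<lambda>i. distr (PiM I (\<lambda>_. \<mu>)) \<mu> (\<lambda>\<omega>. \<omega> i))" .
  qed
qed

lemma iid_sample_mean_Hoeffding:
  fixes \<mu> :: "'a measure" and g :: "'a \<Rightarrow> real" and I :: "'i set"
  assumes \<mu>: "prob_space \<mu>" and g: "g \<in> borel_measurable \<mu>"
    and g_bounded: "AE x in \<mu>. g x \<in> {a..b}" and "a < b"
    and I: "finite I" "I \<noteq> {}" and "\<epsilon> \<ge> 0"
  shows "measure (PiM I (\<lambda>_. \<mu>))
           {xs \<in> space (PiM I (\<lambda>_. \<mu>)). (\<Sum>i\<in>I. g (xs i)) / card I < (\<integral>x. g x \<partial>\<mu>) + \<epsilon>}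
         \<ge> 1 - exp (-2 * real (card I) * \<epsilon>\<^sup>2 / (b - a)\<^sup>2)"
proof -
  define M where "M = PiM I (\<lambda>_. \<mu>)"
  interpret M: prob_space M unfolding M_def by (rule prob_space_PiM) (use \<mu> in auto)
  obtain i\<^sub>0 where "i\<^sub>0 \<in> I" using I by auto
  define X where "X i \<omega> = g (\<omega> i)" for i and \<omega> :: "'i \<Rightarrow> 'a"
  have X_measurable: "X i \<in> borel_measurable M" if "i \<in> I" for i
    unfolding X_def[abs_def] M_def using that g by measurable
  have distr_component: "distr M \<mu> (\<lambda>\<omega>. \<omega> i) = \<mu>" if "i \<in> I" for i
    unfolding M_def by (rule distr_PiM_component) (use \<mu> that in auto)
  have distr_X: "distr M borel (X i) = distr \<mu> borel g" if "i \<in> I" for i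
  proof -
    have "distr M borel (X i) = distr (distr M \<mu> (\<lambda>\<omega>. \<omega> i)) borel g"
      unfolding X_def[abs_def] using g that
      by (subst distr_distr) (auto simp: M_def o_def)
    then show ?thesis using distr_component[OF that] by simp
  qed
  have "M.expectation (X i\<^sub>0) = (\<integral>x. g x \<partial>distr M \<mu> (\<lambda>\<omega>. \<omega> i\<^sub>0))"
    unfolding X_def using \<open>i\<^sub>0 \<in> I\<close> g by (subst integral_distr) (auto simp: M_def)
  then have expectation_sample: "M.expectation (X i\<^sub>0) = (\<integral>x. g x \<partial>\<mu>)"
    using distr_component[OF \<open>i\<^sub>0 \<in> I\<close>] by simp
  interpret Hoeffding_ineq_iid M I X "X i\<^sub>0" a b "M.expectation (X i\<^sub>0)"
  proof unfold_locales
    show "M.indep_vars (\<lambda>_. borel) X I"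
      using M.indep_vars_compose2[OF indep_vars_PiM_components[OF \<mu> \<open>I \<noteq> {}\<close>, folded M_def] g]
      unfolding X_def[abs_def] .
    show "AE x in M. X i\<^sub>0 x \<in> {a..b}"
      unfolding M_def X_def by (rule AE_PiM_component) (use \<mu> \<open>i\<^sub>0 \<in> I\<close> g_bounded in auto)
  qed (use I distr_X X_measurable \<open>i\<^sub>0 \<in> I\<close> in auto)
  define bad where "bad = {xs \<in> space M. (\<integral>x. g x \<partial>\<mu>) + \<epsilon> \<le> (\<Sum>i\<in>I. X i xs) / card I}"
  have "bad \<in> sets M" unfolding bad_def using X_measurable by measurable
  have "M.prob bad \<le> exp (-2 * real (card I) * \<epsilon>\<^sup>2 / (b - a)\<^sup>2)"
    using Hoeffding_ineq_ge'[OF \<open>\<epsilon> \<ge> 0\<close> \<open>a < b\<close> \<open>I \<noteq> {}\<close>]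
    unfolding bad_def expectation_sample by simp
  moreover have "M.prob (space M - bad) = 1 - M.prob bad" using M.prob_compl[OF \<open>bad \<in> sets M\<close>] .
  moreover have "space M - bad
      = {xs \<in> space M. (\<Sum>i\<in>I. g (xs i)) / card I < (\<integral>x. g x \<partial>\<mu>) + \<epsilon>}"
    unfolding bad_def X_def by auto
  ultimately show ?thesis unfolding M_def by simp
qed

lemma exp_Hoeffding_deviation_le:
  fixes n :: nat and c \<delta> :: real
  assumes "n > 0" "c \<ge> 1/2" "0 < \<delta>" "\<delta> \<le> 2 * c"
  shows "exp (-8 * real n * (2 * sqrt (2 * ln (2 * c / \<delta>) / n))\<^sup>2) \<le> \<delta>"
proof -
  define L where "L = ln (2 * c / \<delta>)"
  have "L \<ge> 0" unfolding L_def using assms by simp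
  have "-8 * real n * (2 * sqrt (2 * L / n))\<^sup>2 = - 64 * L"
    using \<open>L \<ge> 0\<close> \<open>n > 0\<close> by (simp add: power_mult_distrib field_simps)
  moreover have "exp (- 64 * L) \<le> exp (- L)" using \<open>L \<ge> 0\<close> by simp
  moreover have "exp (- L) = \<delta> / (2 * c)" unfolding L_def using assms
    by (simp add: exp_minus ln_div exp_diff)
  moreover have "\<delta> / (2 * c) \<le> \<delta>" using assms by (simp add: field_simps)
  ultimately show ?thesis unfolding L_def by simp
qed

lemma path_norm_penalty_le_gamma2_hat:
  assumes "lam \<ge> 0" "path_norm m a w \<le> 2 * gamma2 \<sigma> f"
  shows "lam * (path_norm m a w + 1) \<le> 8 * lam * gamma2_hat \<sigma> f"
proof -
  have "path_norm m a w + 1 \<le> 8 * gamma2_hat \<sigma> f"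
    using assms(2) unfolding gamma2_hat_def by linarith
  from mult_left_mono[OF this assms(1)] show ?thesis by simp
qed

lemma emp_risk_measurable [measurable]:
  assumes "\<sigma> \<in> borel_measurable borel" "fs \<in> borel_measurable borel" "sets \<mu> = sets borel"
  shows "emp_risk fs \<sigma> m a w n \<in> borel_measurable (PiM {..<n} (\<lambda>_. \<mu>))"
  unfolding emp_risk_def sq_loss_def measurable_cong_sets[OF sets_PiM_cong[OF refl assms(3)] refl]
  using assms(1,2) by measurable

lemma emp_risk_Hoeffding:
  fixes \<mu> :: "(real^'d) measure"
  assumes \<sigma>: "\<sigma> \<in> borel_measurable borel" and fs: "fs \<in> borel_measurable borel"
    and \<mu>: "prob_space \<mu>" "sets \<mu> = sets borel" "AE x in \<mu>. x \<in> cube"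
    and fs_range: "\<forall>x\<in>cube. 0 \<le> fs x \<and> fs x \<le> 1"
    and "n > 0" "\<epsilon> \<ge> 0"
  shows "measure (PiM {..<n} (\<lambda>_. \<mu>))
           {xs \<in> space (PiM {..<n} (\<lambda>_. \<mu>)). emp_risk fs \<sigma> m a w n xs < pop_risk \<mu> fs \<sigma> m a w + \<epsilon>}
         \<ge> 1 - exp (-8 * real n * \<epsilon>\<^sup>2)"
proof -
  define loss where "loss x = sq_loss (net \<sigma> m a w x) (fs x)" for x
  have loss_measurable: "loss \<in> borel_measurable \<mu>"
    unfolding loss_def sq_loss_def measurable_cong_sets[OF \<mu>(2) refl] using \<sigma> fs by measurable
  have "loss x \<in> {0..1/2}" if "x \<in> cube" for x
    unfolding loss_def by (rule sq_loss_in_unit_interval[OF net_in_unit_interval]) (use fs_range that in auto)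
  with \<mu>(3) have "AE x in \<mu>. loss x \<in> {0..1/2}" by auto
  from iid_sample_mean_Hoeffding[OF \<mu>(1) loss_measurable this, of "{..<n}" \<epsilon>] assms(7,8)
  show ?thesis unfolding emp_risk_def pop_risk_def loss_def by (simp add: mult.assoc power_divide lessThan_empty_iff)
qed

theorem mainTheorem6:
  fixes \<sigma> :: "real \<Rightarrow> real" and \<mu> :: "(real^'d) measure" and fs :: "real^'d \<Rightarrow> real"
    and m n :: nat and a :: "nat \<Rightarrow> real" and w :: "nat \<Rightarrow> real^'d" and lam \<delta> :: real
  assumes ln_d: "ln (2 * real CARD('d)) \<ge> 1"
    and sigma_lip: "\<forall>s t. \<bar>\<sigma> s - \<sigma> t\<bar> \<le> \<bar>s - t\<bar>"
    and sigma_hom: "\<forall>c t. c \<ge> 0 \<longrightarrow> \<sigma> (c * t) = c * \<sigma> t"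
    and mu_prob: "prob_space \<mu>" and mu_sets: "sets \<mu> = sets borel"
    and mu_supp: "AE x in \<mu>. x \<in> cube"
    and fs_meas: "fs \<in> borel_measurable borel"
    and fs_range: "\<forall>x\<in>cube. 0 \<le> fs x \<and> fs x \<le> 1"
    and fs_Barron: "in_Barron2 \<sigma> fs"
    and n_pos: "n > 0"
    and lam_ge: "lam \<ge> 4 * sqrt (2 * ln (2 * real CARD('d)) / real n)"
    and m_pos: "m > 0"
    and approx: "(\<integral>x. (fs x - (\<Sum>k<m. a k * \<sigma> (w k \<bullet> x)))^2 \<partial>\<mu>) \<le> 3 * (gamma2 \<sigma> fs)^2 / real m"
    and pnorm: "path_norm m a w \<le> 2 * gamma2 \<sigma> fs"
    and delta_pos: "\<delta> > 0"
  shows "measure (PiM {..<n} (\<lambda>_. \<mu>))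
           {xs \<in> space (PiM {..<n} (\<lambda>_. \<mu>)).
              J_reg lam fs \<sigma> m a w n xs
                \<le> pop_risk \<mu> fs \<sigma> m a w + 8 * lam * gamma2_hat \<sigma> fs
                  + 2 * sqrt (2 * ln (2 * (\<Sum>k. 1 / (real (Suc k))^2) / \<delta>) / real n)}
         \<ge> 1 - \<delta>"
proof (cases "\<delta> \<ge> 1")
  case True
  then show ?thesis using measure_nonneg by (smt (verit))
next
  case False
  define c where "c = (\<Sum>k. 1 / (real (Suc k))^2)"
  define \<epsilon> where "\<epsilon> = 2 * sqrt (2 * ln (2 * c / \<delta>) / real n)"
  define P where "P = PiM {..<n} (\<lambda>_. \<mu>)"
  interpret P: prob_space P unfolding P_def by (rule prob_space_PiM) (use mu_prob in auto)
  have "c \<ge> 1" unfolding c_def by (rule suminf_inverse_Suc_squared_ge_1)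
  have "\<epsilon> \<ge> 0" unfolding \<epsilon>_def using \<open>c \<ge> 1\<close> False delta_pos by simp
  have "1-lipschitz_on UNIV \<sigma>"
    using sigma_lip by (intro lipschitz_onI) (auto simp: dist_real_def)
  then have \<sigma>_measurable: "\<sigma> \<in> borel_measurable borel"
    by (intro borel_measurable_continuous_onI lipschitz_on_continuous_on)
  have "exp (-8 * real n * \<epsilon>\<^sup>2) \<le> \<delta>"
    unfolding \<epsilon>_def by (rule exp_Hoeffding_deviation_le) (use n_pos \<open>c \<ge> 1\<close> delta_pos False in auto)
  with emp_risk_Hoeffding[where m=m and a=a and w=w, OF \<sigma>_measurable fs_meas mu_prob mu_sets mu_supp fs_range n_pos \<open>\<epsilon> \<ge> 0\<close>]
  have "1 - \<delta> \<le> P.prob {xs \<in> space P. emp_risk fs \<sigma> m a w n xs < pop_risk \<mu> fs \<sigma> m a w + \<epsilon>}"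
    unfolding P_def by linarith
  also have "\<dots> \<le> P.prob {xs \<in> space P. J_reg lam fs \<sigma> m a w n xs
      \<le> pop_risk \<mu> fs \<sigma> m a w + 8 * lam * gamma2_hat \<sigma> fs + \<epsilon>}"
  proof (rule P.finite_measure_mono)
    have "lam \<ge> 0" using lam_ge ln_d by (smt (verit) real_sqrt_ge_zero divide_nonneg_nonneg of_nat_0_le_iff)
    from path_norm_penalty_le_gamma2_hat[OF this pnorm]
    show "{xs \<in> space P. emp_risk fs \<sigma> m a w n xs < pop_risk \<mu> fs \<sigma> m a w + \<epsilon>}
        \<subseteq> {xs \<in> space P. J_reg lam fs \<sigma> m a w n xs
             \<le> pop_risk \<mu> fs \<sigma> m a w + 8 * lam * gamma2_hat \<sigma> fs + \<epsilon>}"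
      unfolding J_reg_def by auto
    show "{xs \<in> space P. J_reg lam fs \<sigma> m a w n xs
        \<le> pop_risk \<mu> fs \<sigma> m a w + 8 * lam * gamma2_hat \<sigma> fs + \<epsilon>} \<in> sets P"
      unfolding J_reg_def P_def using \<sigma>_measurable fs_meas mu_sets by measurable
  qed
  finally show ?thesis unfolding P_def \<epsilon>_def c_def .
qed

end
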